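(* Let $H=(V,E)$ be a hypergraph with $V$ finite, let $C=(C_R)_{R\subseteq V}$ be non-negative capacities supported on $H$ (i.e. $C_R=0$ whenever $R\notin E$), and let $D=(D_S)_{S\subseteq V}$ be non-negative demands. Then \[ \mathrm{MaxHSP}(V,C,D)\ \le\ \mathrm{MinHypCut}(V,C,D)\ \le\ k_1(H)\,\mathrm{MaxHSP}(V,C,D). \]
   Context: A diversity on a set $X$ is a function $\delta$ from finite subsets of $X$ to $\mathbb{R}$ with $\delta(A)\ge 0$, $\delta(A)=0$ whenever $|A|\le 1$ (values $0$ on larger sets are allowed), and $\delta(A\cup B)+\delta(B\cup C)\ge\delta(A\cup C)$ for all finite $A,B,C$ with $B\neq\emptyset$. For vectors indexed by subsets of $V$ write $C\cdot\delta=\sum_{R\subseteq V}C_R\delta(R)$. All subsets $R\subseteq V$ are regarded as hyperedges (with capacity $C_R$, possibly $0$). For $S\subseteq V$, $\mathcal{T}_S$ is the set of minimal connected sub-hypergraphs (sets $t$ of hyperedges, connected, whose union contains $S$, minimal with this property). $\mathrm{MaxHSP}(V,C,D)$ is the optimal value of the LP: maximize $f$ subject to $\sum_{S}\sum_{t\in\mathcal{T}_S:R\in t}z_{t,S}\le C_R$ for all $R\subseteq V$, $\sum_{t\in\mathcal{T}_S}z_{t,S}=f\cdot D_S$ for all $S\subseteq V$, and $z_{t,S}\ge0$. For $U\subseteq V$ let $\partial U$ be the set of subsets of $V$ meeting both $U$ and $V\setminus U$. $\mathrm{MinHypCut}(V,C,D)=\min_{U\subseteq V}\frac{\sum_{A\in\partial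 U}C_A}{\sum_{S\in\partial U}D_S}$ (over $U$ with nonzero denominator). Given non-negative weights $w$ on $E$, the hypergraph Steiner diversity is $\delta(A)=\min\{\sum_{e\in E'}w(e): E'\subseteq E,\ E' \text{ induces a connected sub-hypergraph containing } A\}$. A diversity on $V$ is supported on $H$ if it is the hypergraph Steiner diversity of $H$ for some non-negative weights on $E$. The $\ell_1^m$ diversity is $(\mathbb{R}^m,\delta_1)$ with $\delta_1(A)=\sum_{i=1}^m\max\{|a_i-b_i|:a,b\in A\}$; a diversity $\delta$ on $V$ is $\ell_1$-embeddable if there are $m$ and $\phi:V\to\mathbb{R}^m$ with $\delta(A)=\delta_1(\phi(A))$ for all $A$. Two diversities $\delta,\delta'$ on $V$ are at distortion $c$ if there are $c_1,c_2>0$ with $c=c_1c_2$ and $\frac1{c_1}\delta(A)\le\delta'(A)\le c_2\delta(A)$ for all $A\subseteq V$. $k_1(\delta)$ is the minimal distortion between $\delta$ and an $\ell_1$-embeddable diversity on $V$, and $k_1(H)$ is the maximum of $k_1(\delta)$ over all diversities $\delta$ supported on $H$. *)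

theory Defs
  imports Complex_Main
begin

definition hlink :: "'a set set \<Rightarrow> ('a \<times> 'a) set" where
  "hlink t = {(x, y). \<exists>e\<in>t. x \<in> e \<and> y \<in> e}"

text \<open>The set t of hyperedges induces a connected sub-hypergraph containing S:
  the hypergraph with vertex set S together with the union of t, and edge set t, is connected.
  (For card S at most 1 the empty set of hyperedges qualifies, matching the convention
  delta(A) = 0 for card A at most 1 of the Steiner diversity.)\<close>
definition conn_contains :: "'a set \<Rightarrow> 'a set set \<Rightarrow> bool" where
  "conn_contains S t \<longleftrightarrow>
     (\<forall>x \<in> S \<union> \<Union>t. \<forall>y \<in> S \<union> \<Union>t. (x, y) \<in> (hlink t)\<^sup>*)"

definition Trees :: "'a set \<Rightarrow> 'a set \<Rightarrow> 'a set set set" where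
  "Trees V S = {t. t \<subseteq> Pow V \<and> conn_contains S t \<and>
                   (\<forall>t'. t' \<subset> t \<longrightarrow> \<not> conn_contains S t')}"

definition hsp_feasible ::
  "'a set \<Rightarrow> ('a set \<Rightarrow> real) \<Rightarrow> ('a set \<Rightarrow> real) \<Rightarrow> real \<Rightarrow> bool" where
  "hsp_feasible V C D f \<longleftrightarrow>
     (\<exists>z :: 'a set \<Rightarrow> 'a set set \<Rightarrow> real.
        (\<forall>S \<in> Pow V. \<forall>t \<in> Trees V S. 0 \<le> z S t) \<and>
        (\<forall>R \<in> Pow V. (\<Sum>S \<in> Pow V. \<Sum>t \<in> {t \<in> Trees V S. R \<in> t}. z S t) \<le> C R) \<and>
        (\<forall>S \<in> Pow V. (\<Sum>t \<in> Trees V S. z S t) = f * D S))"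

definition MaxHSP :: "'a set \<Rightarrow> ('a set \<Rightarrow> real) \<Rightarrow> ('a set \<Rightarrow> real) \<Rightarrow> real" where
  "MaxHSP V C D = Sup {f. hsp_feasible V C D f}"

definition boundary :: "'a set \<Rightarrow> 'a set \<Rightarrow> 'a set set" where
  "boundary V U = {A. A \<subseteq> V \<and> A \<inter> U \<noteq> {} \<and> A \<inter> (V - U) \<noteq> {}}"

definition MinHypCut :: "'a set \<Rightarrow> ('a set \<Rightarrow> real) \<Rightarrow> ('a set \<Rightarrow> real) \<Rightarrow> real" where
  "MinHypCut V C D =
     Min {(\<Sum>A \<in> boundary V U. C A) / (\<Sum>S \<in> boundary V U. D S) | U.
            U \<subseteq> V \<and> (\<Sum>S \<in> boundary V U. D S) \<noteq> 0}"

definition is_diversity :: "'a set \<Rightarrow> ('a set \<Rightarrow> real) \<Rightarrow> bool" where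
  "is_diversity X \<delta> \<longleftrightarrow>
     (\<forall>A. finite A \<and> A \<subseteq> X \<longrightarrow> 0 \<le> \<delta> A) \<and>
     (\<forall>A. finite A \<and> A \<subseteq> X \<and> card A \<le> 1 \<longrightarrow> \<delta> A = 0) \<and>
     (\<forall>A B C. finite A \<and> A \<subseteq> X \<and> finite B \<and> B \<subseteq> X \<and> finite C \<and> C \<subseteq> X \<and> B \<noteq> {}
        \<longrightarrow> \<delta> (A \<union> C) \<le> \<delta> (A \<union> B) + \<delta> (B \<union> C))"

definition steiner :: "'a set set \<Rightarrow> ('a set \<Rightarrow> real) \<Rightarrow> 'a set \<Rightarrow> real" where
  "steiner E w A = Min {(\<Sum>e \<in> E'. w e) | E'. E' \<subseteq> E \<and> conn_contains A E'}"

definition supported_on :: "'a set \<Rightarrow> 'a set set \<Rightarrow> ('a set \<Rightarrow> real) \<Rightarrow> bool" where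
  "supported_on V E \<delta> \<longleftrightarrow> is_diversity V \<delta> \<and>
     (\<exists>w. (\<forall>e \<in> E. 0 \<le> w e) \<and> (\<forall>A. A \<subseteq> V \<longrightarrow> \<delta> A = steiner E w A))"

text \<open>The l1^m diversity; points of R^m are represented as nat => real, coordinates i < m.\<close>
definition l1_div :: "nat \<Rightarrow> (nat \<Rightarrow> real) set \<Rightarrow> real" where
  "l1_div m P = (\<Sum>i<m. Max (insert 0 {\<bar>p i - q i\<bar> | p q. p \<in> P \<and> q \<in> P}))"

definition l1_embeddable :: "'a set \<Rightarrow> ('a set \<Rightarrow> real) \<Rightarrow> bool" where
  "l1_embeddable V \<delta> \<longleftrightarrow>
     (\<exists>m. \<exists>\<phi> :: 'a \<Rightarrow> nat \<Rightarrow> real. \<forall>A. A \<subseteq> V \<longrightarrow> \<delta> A = l1_div m (\<phi> ` A))"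

definition at_distortion :: "'a set \<Rightarrow> ('a set \<Rightarrow> real) \<Rightarrow> ('a set \<Rightarrow> real) \<Rightarrow> real \<Rightarrow> bool" where
  "at_distortion V \<delta> \<delta>' c \<longleftrightarrow>
     (\<exists>c1 c2. 0 < c1 \<and> 0 < c2 \<and> c = c1 * c2 \<and>
        (\<forall>A. A \<subseteq> V \<longrightarrow> \<delta> A / c1 \<le> \<delta>' A \<and> \<delta>' A \<le> c2 * \<delta> A))"

definition k1_div :: "'a set \<Rightarrow> ('a set \<Rightarrow> real) \<Rightarrow> real" where
  "k1_div V \<delta> = Inf {c. \<exists>\<delta>'. l1_embeddable V \<delta>' \<and> at_distortion V \<delta> \<delta>' c}"

definition k1_hyp :: "'a set \<Rightarrow> 'a set set \<Rightarrow> real" where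
  "k1_hyp V E = Sup {k1_div V \<delta> | \<delta>. supported_on V E \<delta>}"

end

theory Submission
  imports Defs
begin

text \<open>The first inequality is weak LP duality: a minimal connected sub-hypergraph containing a
  demand set that crosses a cut uses a hyperedge crossing the cut. For the second, take any
  g > MaxHSP. Farkas' lemma turns infeasibility of g into hyperedge weights w whose Steiner
  diversity \<delta> satisfies \<Sum> C \<delta> < g \<Sum> D \<delta>. An l1 diversity is a sum of
  line diversities A \<mapsto> max g(A) - min g(A), and each of those is a non-negative
  combination of cut indicators [A \<in> \<partial>U]; hence \<Sum> C \<delta>' \<ge> MinHypCut \<Sum> D \<delta>'
  for every l1 diversity \<delta>'. Comparing \<delta> with l1 diversities at distortion close to k1(H)
  gives MinHypCut \<le> k1(H) g. That k1(H) is finite follows from the Frechet-type embedding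
  x \<mapsto> (\<delta>{v, x}) for v \<in> V, of distortion 2 |V|^2.\<close>

section \<open>Farkas' lemma\<close>

definition dot :: "'i set \<Rightarrow> ('i \<Rightarrow> real) \<Rightarrow> ('i \<Rightarrow> real) \<Rightarrow> real" where
  "dot I y v = (\<Sum>i\<in>I. y i * v i)"

lemma dot_diff_right: "dot I y (\<lambda>i. u i - c * v i) = dot I y u - c * dot I y v"
  by (simp add: dot_def algebra_simps sum_subtractf sum_distrib_left)

lemma dot_diff_left: "dot I (\<lambda>i. y i - c * v i) u = dot I y u - c * dot I v u"
  by (simp add: dot_def algebra_simps sum_subtractf sum_distrib_left)

text \<open>Fourier-Motzkin step of the proof of Farkas' lemma: given w with \<open>\<langle>w, c\<rangle> < 0\<close>,
  every vector v is moved along c into the hyperplane \<open>\<langle>w, _\<rangle> = 0\<close>.\<close>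
definition project_along :: "'i set \<Rightarrow> ('i \<Rightarrow> real) \<Rightarrow> ('i \<Rightarrow> real) \<Rightarrow> ('i \<Rightarrow> real) \<Rightarrow> 'i \<Rightarrow> real" where
  "project_along I w c v = (\<lambda>i. v i - dot I w v / dot I w c * c i)"

lemma dot_project_along:
  "dot I y (project_along I w c v) = dot I (\<lambda>i. y i - dot I y c / dot I w c * w i) v"
  unfolding project_along_def dot_diff_left dot_diff_right by simp

lemma cone_project_along:
  assumes wc: "dot I w c < 0"
    and cone: "\<forall>y. 0 \<le> dot I y c \<and> (\<forall>j\<in>J. 0 \<le> dot I y (a j)) \<longrightarrow> 0 \<le> dot I y b"
  shows "\<forall>y. (\<forall>j\<in>J. 0 \<le> dot I y (project_along I w c (a j))) \<longrightarrow> 0 \<le> dot I y (project_along I w c b)"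
proof (intro allI impI)
  fix y
  define y' where "y' = (\<lambda>i. y i - dot I y c / dot I w c * w i)"
  assume "\<forall>j\<in>J. 0 \<le> dot I y (project_along I w c (a j))"
  then have "\<forall>j\<in>J. 0 \<le> dot I y' (a j)" unfolding dot_project_along y'_def .
  moreover have "dot I y' c = 0" unfolding y'_def dot_diff_left using wc by simp
  ultimately have "0 \<le> dot I y' b" using cone by simp
  then show "0 \<le> dot I y (project_along I w c b)" unfolding dot_project_along y'_def .
qed

lemma lift_project_along:
  assumes wc: "dot I w c < 0" and wa: "\<forall>j\<in>J. 0 \<le> dot I w (a j)" and wb: "dot I w b < 0"
    and l0: "\<forall>j\<in>J. 0 \<le> l j"
    and l: "\<forall>i\<in>I. project_along I w c b i = (\<Sum>j\<in>J. l j * project_along I w c (a j) i)"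
  obtains mu where "0 \<le> mu" "\<forall>i\<in>I. b i = (\<Sum>j\<in>J. l j * a j i) + mu * c i"
proof
  define mu where "mu = (dot I w b - (\<Sum>j\<in>J. l j * dot I w (a j))) / dot I w c"
  have "0 \<le> (\<Sum>j\<in>J. l j * dot I w (a j))" using l0 wa by (simp add: sum_nonneg)
  then show "0 \<le> mu" unfolding mu_def using wb wc by (simp add: divide_nonpos_neg)
  show "\<forall>i\<in>I. b i = (\<Sum>j\<in>J. l j * a j i) + mu * c i"
  proof
    fix i assume "i \<in> I"
    then have "b i - dot I w b / dot I w c * c i
        = (\<Sum>j\<in>J. l j * a j i) - (\<Sum>j\<in>J. l j * dot I w (a j)) / dot I w c * c i"
      using l unfolding project_along_def
      by (simp add: algebra_simps sum_subtractf sum_distrib_left sum_divide_distrib sum_distrib_right)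
    then show "b i = (\<Sum>j\<in>J. l j * a j i) + mu * c i"
      unfolding mu_def by (simp add: algebra_simps diff_divide_distrib)
  qed
qed

lemma farkas_lemma:
  assumes "finite J" and fI: "finite I"
    and "\<forall>y. (\<forall>j\<in>J. 0 \<le> dot I y (a j)) \<longrightarrow> 0 \<le> dot I y b"
  shows "\<exists>l. (\<forall>j\<in>J. 0 \<le> l j) \<and> (\<forall>i\<in>I. b i = (\<Sum>j\<in>J. l j * a j i))"
  using assms(1,3)
proof (induction J arbitrary: a b rule: finite_induct)
  case empty
  then have "0 \<le> dot I (\<lambda>i. - b i) b" by simp
  then have "(\<Sum>i\<in>I. b i * b i) \<le> 0" by (simp add: dot_def sum_negf)
  then have "\<forall>i\<in>I. b i * b i = 0"
    using sum_nonneg_eq_0_iff[OF fI, of "\<lambda>i. b i * b i"] by (simp add: antisym sum_nonneg)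
  then show ?case by simp
next
  case (insert m J)
  show ?case
  proof (cases "\<forall>y. (\<forall>j\<in>J. 0 \<le> dot I y (a j)) \<longrightarrow> 0 \<le> dot I y b")
    case True
    from insert.IH[OF True] obtain l where l: "\<forall>j\<in>J. 0 \<le> l j" "\<forall>i\<in>I. b i = (\<Sum>j\<in>J. l j * a j i)"
      by blast
    show ?thesis
      using l insert.hyps by (intro exI[of _ "l(m := 0)"]) (auto intro!: sum.cong)
  next
    case False
    then obtain w where w: "\<forall>j\<in>J. 0 \<le> dot I w (a j)" "dot I w b < 0" by force
    with insert.prems have wm: "dot I w (a m) < 0" by (metis insert_iff not_le)
    have "\<forall>y. (\<forall>j\<in>J. 0 \<le> dot I y (project_along I w (a m) (a j)))
        \<longrightarrow> 0 \<le> dot I y (project_along I w (a m) b)"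
      using insert.prems by (intro cone_project_along[OF wm]) simp
    from insert.IH[OF this] obtain l where l: "\<forall>j\<in>J. 0 \<le> l j"
      "\<forall>i\<in>I. project_along I w (a m) b i = (\<Sum>j\<in>J. l j * project_along I w (a m) (a j) i)"
      by blast
    obtain mu where "0 \<le> mu" "\<forall>i\<in>I. b i = (\<Sum>j\<in>J. l j * a j i) + mu * a m i"
      using lift_project_along[OF wm w l] by blast
    moreover have "(\<Sum>j\<in>insert m J. (l(m := mu)) j * a j i) = mu * a m i + (\<Sum>j\<in>J. l j * a j i)" for i
    proof -
      have "(\<Sum>j\<in>J. (l(m := mu)) j * a j i) = (\<Sum>j\<in>J. l j * a j i)"
        using insert.hyps(2) by (intro sum.cong) auto
      with insert.hyps show ?thesis by simp
    qed
    ultimately show ?thesis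
      using l(1) by (intro exI[of _ "l(m := mu)"]) (simp add: add.commute)
  qed
qed

section \<open>Connected sub-hypergraphs and Steiner diversities\<close>

lemma rtrancl_hlink_mono: "t \<subseteq> t' \<Longrightarrow> (hlink t)\<^sup>* \<subseteq> (hlink t')\<^sup>*"
  unfolding hlink_def by (rule rtrancl_mono) blast

lemma conn_contains_union:
  assumes "conn_contains (A \<union> B) E1" "conn_contains (B \<union> C) E2" "b \<in> B"
  shows "conn_contains (A \<union> C) (E1 \<union> E2)"
  unfolding conn_contains_def
proof (intro ballI)
  fix x y assume x: "x \<in> A \<union> C \<union> \<Union>(E1 \<union> E2)" and y: "y \<in> A \<union> C \<union> \<Union>(E1 \<union> E2)"
  have m1: "(hlink E1)\<^sup>* \<subseteq> (hlink (E1 \<union> E2))\<^sup>*" by (rule rtrancl_hlink_mono) blast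
  have m2: "(hlink E2)\<^sup>* \<subseteq> (hlink (E1 \<union> E2))\<^sup>*" by (rule rtrancl_hlink_mono) blast
  have to_b: "(z, b) \<in> (hlink (E1 \<union> E2))\<^sup>* \<and> (b, z) \<in> (hlink (E1 \<union> E2))\<^sup>*"
    if "z \<in> A \<union> C \<union> \<Union>(E1 \<union> E2)" for z
  proof -
    have "z \<in> A \<union> B \<union> \<Union>E1 \<or> z \<in> B \<union> C \<union> \<Union>E2" using that by blast
    then show ?thesis
      using assms m1 m2 unfolding conn_contains_def by blast
  qed
  show "(x, y) \<in> (hlink (E1 \<union> E2))\<^sup>*"
    using to_b[OF x] to_b[OF y] by (meson rtrancl_trans)
qed

lemma conn_contains_empty: "finite A \<Longrightarrow> card A \<le> 1 \<Longrightarrow> conn_contains A {}"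
  unfolding conn_contains_def by (auto simp: card_le_Suc0_iff_eq)

lemma conn_contains_subset: "conn_contains V E \<Longrightarrow> A \<subseteq> V \<Longrightarrow> conn_contains A E"
  unfolding conn_contains_def by blast

lemma conn_contains_singleton: "conn_contains R {R}"
  unfolding conn_contains_def hlink_def by auto

lemma finite_Trees: "finite V \<Longrightarrow> finite (Trees V S)"
  by (rule finite_subset[of _ "Pow (Pow V)"]) (auto simp: Trees_def)

lemma Trees_subset_Pow: "t \<in> Trees V S \<Longrightarrow> t \<subseteq> Pow V"
  by (simp add: Trees_def)

lemma Trees_subset_exists:
  assumes "finite E'" "E' \<subseteq> Pow V" "conn_contains S E'"
  obtains t where "t \<in> Trees V S" "t \<subseteq> E'"
proof -
  define F where "F = {t. t \<subseteq> E' \<and> conn_contains S t}"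
  have "finite F" unfolding F_def using assms(1) by simp
  moreover have "E' \<in> F" unfolding F_def using assms(3) by simp
  ultimately obtain t where tF: "t \<in> F" and tmin: "\<And>t'. t' \<in> F \<Longrightarrow> t' \<subseteq> t \<Longrightarrow> t = t'"
    using finite_has_minimal by (metis empty_iff)
  have "t \<in> Trees V S"
    unfolding Trees_def
  proof (intro CollectI conjI allI impI notI)
    show "t \<subseteq> Pow V" "conn_contains S t" using tF assms(2) unfolding F_def by auto
    fix t' assume "t' \<subset> t" "conn_contains S t'"
    then have "t' \<in> F" using tF unfolding F_def by auto
    with tmin \<open>t' \<subset> t\<close> show False by blast
  qed
  with tF show ?thesis unfolding F_def using that by blast
qed

lemma steiner_attained:
  assumes "finite E" "conn_contains A E"
  shows "\<exists>E'\<subseteq>E. conn_contains A E' \<and> steiner E w A = (\<Sum>e\<in>E'. w e)"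
proof -
  have "steiner E w A \<in> {(\<Sum>e \<in> E'. w e) | E'. E' \<subseteq> E \<and> conn_contains A E'}"
    unfolding steiner_def using assms by (intro Min_in) auto
  then show ?thesis by blast
qed

lemma steiner_le:
  assumes "finite E" "E' \<subseteq> E" "conn_contains A E'"
  shows "steiner E w A \<le> (\<Sum>e\<in>E'. w e)"
  unfolding steiner_def using assms by (intro Min_le) auto

lemma steiner_nonneg:
  assumes "finite E" "conn_contains A E" "\<forall>e\<in>E. 0 \<le> w e"
  shows "0 \<le> steiner E w A"
proof -
  obtain E' where "E' \<subseteq> E" "steiner E w A = (\<Sum>e\<in>E'. w e)"
    using steiner_attained[OF assms(1,2)] by blast
  with assms(3) show ?thesis by (metis subsetD sum_nonneg)
qed

lemma steiner_le_tree_weight: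
  assumes "finite V" "E \<subseteq> Pow V" "conn_contains S E" "\<forall>e\<in>E. 0 \<le> w e"
  obtains t where "t \<in> Trees V S" "(\<Sum>R\<in>t. w R) \<le> steiner E w S"
proof -
  have fE: "finite E" using assms(1,2) by (simp add: finite_subset)
  obtain E' where E': "E' \<subseteq> E" "conn_contains S E'" "steiner E w S = (\<Sum>e\<in>E'. w e)"
    using steiner_attained[OF fE assms(3)] by blast
  have fE': "finite E'" using E'(1) fE by (rule finite_subset)
  have "E' \<subseteq> Pow V" using E'(1) assms(2) by (rule subset_trans)
  then obtain t where t: "t \<in> Trees V S" "t \<subseteq> E'"
    using Trees_subset_exists[OF fE' _ E'(2)] by blast
  have "(\<Sum>R\<in>t. w R) \<le> (\<Sum>e\<in>E'. w e)"
    using t(2) E'(1) assms(4) by (intro sum_mono2[OF fE']) auto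
  with t E'(3) that show ?thesis by simp
qed

lemma steiner_triangle:
  assumes fE: "finite E" and w: "\<forall>e\<in>E. 0 \<le> w e"
    and "conn_contains (A \<union> B) E" "conn_contains (B \<union> C) E" "b \<in> B"
  shows "steiner E w (A \<union> C) \<le> steiner E w (A \<union> B) + steiner E w (B \<union> C)"
proof -
  obtain E1 where E1: "E1 \<subseteq> E" "conn_contains (A \<union> B) E1" "steiner E w (A \<union> B) = (\<Sum>e\<in>E1. w e)"
    using steiner_attained[OF fE assms(3)] by blast
  obtain E2 where E2: "E2 \<subseteq> E" "conn_contains (B \<union> C) E2" "steiner E w (B \<union> C) = (\<Sum>e\<in>E2. w e)"
    using steiner_attained[OF fE assms(4)] by blast
  have fE12: "finite E1" "finite E2" using finite_subset[OF E1(1) fE] finite_subset[OF E2(1) fE] .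
  have "steiner E w (A \<union> C) \<le> (\<Sum>e\<in>E1 \<union> E2. w e)"
    using E1(1) E2(1) conn_contains_union[OF E1(2) E2(2) \<open>b \<in> B\<close>] by (intro steiner_le[OF fE]) auto
  also have "\<dots> \<le> (\<Sum>e\<in>E1. w e) + (\<Sum>e\<in>E2. w e)"
  proof -
    have "0 \<le> (\<Sum>e\<in>E1 \<inter> E2. w e)" using w E1(1) by (intro sum_nonneg) auto
    with sum.union_inter[OF fE12, of w] show ?thesis by linarith
  qed
  finally show ?thesis using E1 E2 by simp
qed

lemma is_diversity_steiner:
  assumes fV: "finite V" and EV: "E \<subseteq> Pow V" and cV: "conn_contains V E"
    and w: "\<forall>e\<in>E. 0 \<le> w e"
  shows "is_diversity V (steiner E w)"
  unfolding is_diversity_def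
proof (intro conjI allI impI)
  have fE: "finite E" using fV EV by (simp add: finite_subset)
  have nonneg: "0 \<le> steiner E w A" if "A \<subseteq> V" for A
    by (rule steiner_nonneg[OF fE conn_contains_subset[OF cV that] w])
  show "0 \<le> steiner E w A" if "finite A \<and> A \<subseteq> V" for A
    using nonneg that by blast
  show "steiner E w A = 0" if A: "finite A \<and> A \<subseteq> V \<and> card A \<le> 1" for A
  proof -
    have "steiner E w A \<le> (\<Sum>e\<in>{}. w e)"
      by (rule steiner_le[OF fE]) (use A conn_contains_empty in auto)
    with nonneg[of A] A show ?thesis by simp
  qed
  fix A B C assume H: "finite A \<and> A \<subseteq> V \<and> finite B \<and> B \<subseteq> V \<and> finite C \<and> C \<subseteq> V \<and> B \<noteq> {}"
  then obtain b where "b \<in> B" by blast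
  moreover have "A \<union> B \<subseteq> V" "B \<union> C \<subseteq> V" using H by auto
  ultimately show "steiner E w (A \<union> C) \<le> steiner E w (A \<union> B) + steiner E w (B \<union> C)"
    using conn_contains_subset[OF cV] by (intro steiner_triangle[OF fE w]) auto
qed

lemma supported_on_steiner:
  assumes "finite V" "E \<subseteq> Pow V" "conn_contains V E" "\<forall>e\<in>E. 0 \<le> w e"
  shows "supported_on V E (steiner E w)"
  unfolding supported_on_def using is_diversity_steiner[OF assms] assms(4) by blast

lemma steiner_le_weight: "finite E \<Longrightarrow> R \<in> E \<Longrightarrow> steiner E w R \<le> w R"
  using steiner_le[of E "{R}" R w] conn_contains_singleton by auto


section \<open>Weak duality: packings are bounded by cuts\<close>

lemma boundary_subset_Pow: "boundary V U \<subseteq> Pow V"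
  unfolding boundary_def by blast

lemma finite_boundary: "finite V \<Longrightarrow> finite (boundary V U)"
  by (rule finite_subset[OF boundary_subset_Pow]) simp

lemma rtrancl_hlink_crossing:
  assumes "(x, y) \<in> (hlink t)\<^sup>*" "x \<in> U" "y \<notin> U"
  shows "\<exists>e\<in>t. e \<inter> U \<noteq> {} \<and> e - U \<noteq> {}"
  using assms
proof (induction rule: rtrancl_induct)
  case (step y z)
  then show ?case
    by (cases "y \<in> U") (auto simp: hlink_def)
qed simp

lemma Trees_meet_boundary:
  assumes t: "t \<in> Trees V S" and S: "S \<in> boundary V U"
  shows "\<exists>R\<in>t. R \<in> boundary V U"
proof -
  from S obtain x y where xy: "x \<in> S" "x \<in> U" "y \<in> S" "y \<notin> U"
    unfolding boundary_def by blast
  have "(x, y) \<in> (hlink t)\<^sup>*"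
    using t xy unfolding Trees_def conn_contains_def by blast
  then obtain e where "e \<in> t" "e \<inter> U \<noteq> {}" "e - U \<noteq> {}"
    using rtrancl_hlink_crossing xy by metis
  moreover have "e \<subseteq> V" using \<open>e \<in> t\<close> Trees_subset_Pow[OF t] by blast
  ultimately show ?thesis unfolding boundary_def by blast
qed

lemma hsp_feasible_le_cut:
  assumes fV: "finite V" and feas: "hsp_feasible V C D f"
  shows "f * (\<Sum>S\<in>boundary V U. D S) \<le> (\<Sum>A\<in>boundary V U. C A)"
proof -
  obtain z where z0: "\<forall>S \<in> Pow V. \<forall>t \<in> Trees V S. 0 \<le> z S t"
    and zC: "\<forall>R \<in> Pow V. (\<Sum>S \<in> Pow V. \<Sum>t \<in> {t \<in> Trees V S. R \<in> t}. z S t) \<le> C R"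
    and zD: "\<forall>S \<in> Pow V. (\<Sum>t \<in> Trees V S. z S t) = f * D S"
    using feas unfolding hsp_feasible_def by blast
  define B where "B = boundary V U"
  have BP: "B \<subseteq> Pow V" unfolding B_def by (rule boundary_subset_Pow)
  have fB: "finite B" unfolding B_def using fV by (rule finite_boundary)
  have fT: "\<And>S. finite (Trees V S)" using finite_Trees[OF fV] .
  have "f * (\<Sum>S\<in>B. D S) = (\<Sum>S\<in>B. \<Sum>t \<in> Trees V S. z S t)"
    using zD BP by (simp add: sum_distrib_left subset_eq)
  also have "\<dots> \<le> (\<Sum>S\<in>B. \<Sum>t \<in> Trees V S. \<Sum>R\<in>B. if R \<in> t then z S t else 0)"
  proof (intro sum_mono)
    fix S t assume S: "S \<in> B" and t: "t \<in> Trees V S"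
    obtain R where R: "R \<in> t" "R \<in> B" using Trees_meet_boundary[OF t] S unfolding B_def by blast
    have "0 \<le> z S t" using z0 S t BP by blast
    then show "z S t \<le> (\<Sum>R\<in>B. if R \<in> t then z S t else 0)"
      using member_le_sum[OF R(2), of "\<lambda>R. if R \<in> t then z S t else 0"] R fB by auto
  qed
  also have "\<dots> = (\<Sum>S\<in>B. \<Sum>R\<in>B. \<Sum>t \<in> Trees V S. if R \<in> t then z S t else 0)"
    by (intro sum.cong refl) (rule sum.swap)
  also have "\<dots> = (\<Sum>R\<in>B. \<Sum>S\<in>B. \<Sum>t \<in> Trees V S. if R \<in> t then z S t else 0)"
    by (rule sum.swap)
  also have "\<dots> = (\<Sum>R\<in>B. \<Sum>S\<in>B. \<Sum>t \<in> {t \<in> Trees V S. R \<in> t}. z S t)"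
    by (simp only: sum.inter_filter[OF fT])
  also have "\<dots> \<le> (\<Sum>R\<in>B. \<Sum>S\<in>Pow V. \<Sum>t \<in> {t \<in> Trees V S. R \<in> t}. z S t)"
    using fV BP z0 by (intro sum_mono sum_mono2) (auto intro!: sum_nonneg)
  also have "\<dots> \<le> (\<Sum>R\<in>B. C R)"
    using zC BP by (intro sum_mono) blast
  finally show ?thesis unfolding B_def .
qed

lemma hsp_feasible_zero: "\<forall>R. R \<subseteq> V \<longrightarrow> 0 \<le> C R \<Longrightarrow> hsp_feasible V C D 0"
  unfolding hsp_feasible_def by (intro exI[of _ "\<lambda>S t. 0"]) auto

lemma MinHypCut_le:
  assumes "finite V" "U \<subseteq> V" "(\<Sum>S\<in>boundary V U. D S) \<noteq> 0"
  shows "MinHypCut V C D \<le> (\<Sum>A\<in>boundary V U. C A) / (\<Sum>S\<in>boundary V U. D S)"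
  unfolding MinHypCut_def using assms by (intro Min_le) auto

lemma MinHypCut_attained:
  assumes fV: "finite V" and D0: "\<forall>S. S \<subseteq> V \<longrightarrow> 0 \<le> D S"
    and ex: "\<exists>S. S \<subseteq> V \<and> 2 \<le> card S \<and> 0 < D S"
  obtains U where "U \<subseteq> V" "(\<Sum>S\<in>boundary V U. D S) \<noteq> 0"
    "MinHypCut V C D = (\<Sum>A\<in>boundary V U. C A) / (\<Sum>S\<in>boundary V U. D S)"
proof -
  obtain S where S: "S \<subseteq> V" "2 \<le> card S" "0 < D S" using ex by blast
  then have "finite S" "\<not> card S \<le> Suc 0" by (auto intro: card.infinite ccontr)
  then obtain x y where xy: "x \<in> S" "y \<in> S" "x \<noteq> y"
    using card_le_Suc0_iff_eq by blast
  have "S \<in> boundary V {x}" unfolding boundary_def using S xy by blast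
  moreover have "finite (boundary V {x})" using fV by (rule finite_boundary)
  ultimately have "D S \<le> (\<Sum>S \<in> boundary V {x}. D S)"
    using D0 by (intro member_le_sum) (auto simp: boundary_def)
  then have "(\<Sum>S \<in> boundary V {x}. D S) \<noteq> 0" using S by auto
  then have "{(\<Sum>A\<in>boundary V U. C A) / (\<Sum>S\<in>boundary V U. D S) | U.
      U \<subseteq> V \<and> (\<Sum>S\<in>boundary V U. D S) \<noteq> 0} \<noteq> {}"
    using xy S by blast
  from Min_in[OF _ this] fV that show ?thesis
    unfolding MinHypCut_def by auto
qed

lemma MinHypCut_mult_le_cut:
  assumes "finite V" "U \<subseteq> V"
    and C0: "\<forall>R. R \<subseteq> V \<longrightarrow> 0 \<le> C R" and D0: "\<forall>S. S \<subseteq> V \<longrightarrow> 0 \<le> D S"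
  shows "MinHypCut V C D * (\<Sum>S\<in>boundary V U. D S) \<le> (\<Sum>A\<in>boundary V U. C A)"
proof (cases "(\<Sum>S\<in>boundary V U. D S) = 0")
  case True
  have "0 \<le> (\<Sum>A\<in>boundary V U. C A)"
    by (intro sum_nonneg) (use C0 in \<open>auto simp: boundary_def\<close>)
  with True show ?thesis by simp
next
  case False
  moreover have "0 \<le> (\<Sum>S\<in>boundary V U. D S)"
    by (intro sum_nonneg) (use D0 in \<open>auto simp: boundary_def\<close>)
  ultimately show ?thesis
    using MinHypCut_le[OF assms(1,2) False, of C] by (simp add: pos_le_divide_eq)
qed

lemma hsp_feasible_le_MinHypCut:
  assumes fV: "finite V" and D0: "\<forall>S. S \<subseteq> V \<longrightarrow> 0 \<le> D S"
    and ex: "\<exists>S. S \<subseteq> V \<and> 2 \<le> card S \<and> 0 < D S" and feas: "hsp_feasible V C D f"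
  shows "f \<le> MinHypCut V C D"
proof -
  obtain U where U: "U \<subseteq> V" "(\<Sum>S\<in>boundary V U. D S) \<noteq> 0"
    and M: "MinHypCut V C D = (\<Sum>A\<in>boundary V U. C A) / (\<Sum>S\<in>boundary V U. D S)"
    using MinHypCut_attained[OF fV D0 ex] by blast
  have "0 \<le> (\<Sum>S\<in>boundary V U. D S)"
    by (intro sum_nonneg) (use D0 in \<open>auto simp: boundary_def\<close>)
  with U(2) hsp_feasible_le_cut[OF fV feas, of U] show ?thesis
    unfolding M by (simp add: pos_le_divide_eq)
qed

lemma
  assumes "finite V" "\<forall>R. R \<subseteq> V \<longrightarrow> 0 \<le> C R" "\<forall>S. S \<subseteq> V \<longrightarrow> 0 \<le> D S"
    and "\<exists>S. S \<subseteq> V \<and> 2 \<le> card S \<and> 0 < D S"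
  shows MaxHSP_le_MinHypCut: "MaxHSP V C D \<le> MinHypCut V C D"
    and MaxHSP_nonneg: "0 \<le> MaxHSP V C D"
    and hsp_feasible_le_MaxHSP: "hsp_feasible V C D f \<Longrightarrow> f \<le> MaxHSP V C D"
proof -
  have bounded: "bdd_above {f. hsp_feasible V C D f}"
    using hsp_feasible_le_MinHypCut[OF assms(1,3,4)] by (auto simp: bdd_above_def)
  have zero: "0 \<in> {f. hsp_feasible V C D f}"
    using hsp_feasible_zero[OF assms(2)] by simp
  show "MaxHSP V C D \<le> MinHypCut V C D"
    unfolding MaxHSP_def using zero hsp_feasible_le_MinHypCut[OF assms(1,3,4)]
    by (intro cSup_least) auto
  show "0 \<le> MaxHSP V C D"
    unfolding MaxHSP_def using zero bounded by (rule cSup_upper)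
  show "hsp_feasible V C D f \<Longrightarrow> f \<le> MaxHSP V C D"
    unfolding MaxHSP_def using bounded by (intro cSup_upper) auto
qed

section \<open>Cut decomposition of l1 diversities\<close>

definition spread :: "('a \<Rightarrow> real) \<Rightarrow> 'a set \<Rightarrow> real" where
  "spread g A = Max (insert 0 {\<bar>g p - g q\<bar> | p q. p \<in> A \<and> q \<in> A})"

lemma l1_div_image: "l1_div m (\<phi> ` A) = (\<Sum>i<m. spread (\<lambda>x. \<phi> x i) A)"
proof -
  have "{\<bar>p i - q i\<bar> | p q. p \<in> \<phi> ` A \<and> q \<in> \<phi> ` A} = {\<bar>\<phi> p i - \<phi> q i\<bar> | p q. p \<in> A \<and> q \<in> A}"
    for i by auto
  then show ?thesis unfolding l1_div_def spread_def by simp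
qed

lemma finite_abs_diffs: "finite A \<Longrightarrow> finite {\<bar>g p - g q\<bar> | p q. p \<in> A \<and> q \<in> A}"
  by (rule finite_image_set2) auto

lemma spread_empty [simp]: "spread g {} = 0"
  unfolding spread_def by simp

lemma spread_nonneg: "finite A \<Longrightarrow> 0 \<le> spread g A"
  unfolding spread_def using finite_abs_diffs by (intro Max_ge) auto

lemma l1_div_nonneg: "finite A \<Longrightarrow> 0 \<le> l1_div m (\<phi> ` A)"
  unfolding l1_div_image by (simp add: sum_nonneg spread_nonneg)

lemma abs_diff_le_spread: "finite A \<Longrightarrow> p \<in> A \<Longrightarrow> q \<in> A \<Longrightarrow> \<bar>g p - g q\<bar> \<le> spread g A"
  unfolding spread_def using finite_abs_diffs by (intro Max_ge) auto

lemma spread_le: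
  "finite A \<Longrightarrow> 0 \<le> K \<Longrightarrow> (\<And>p q. p \<in> A \<Longrightarrow> q \<in> A \<Longrightarrow> \<bar>g p - g q\<bar> \<le> K) \<Longrightarrow> spread g A \<le> K"
  unfolding spread_def using finite_abs_diffs by (subst Max_le_iff) auto

lemma spread_eq_Max_minus_Min:
  assumes "finite A" "A \<noteq> {}"
  shows "spread g A = Max (g ` A) - Min (g ` A)"
proof (rule antisym)
  have bounds: "Min (g ` A) \<le> g p \<and> g p \<le> Max (g ` A)" if "p \<in> A" for p
    using that assms(1) by simp
  obtain p where "p \<in> A" using assms(2) by blast
  then have "0 \<le> Max (g ` A) - Min (g ` A)" using bounds[of p] by simp
  then show "spread g A \<le> Max (g ` A) - Min (g ` A)"
  proof (rule spread_le[OF assms(1)])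
    fix p q assume "p \<in> A" "q \<in> A"
    with bounds[of p] bounds[of q] show "\<bar>g p - g q\<bar> \<le> Max (g ` A) - Min (g ` A)"
      by (simp add: abs_le_iff)
  qed
next
  have "Max (g ` A) \<in> g ` A" "Min (g ` A) \<in> g ` A"
    using assms by simp_all
  then obtain p q where "Max (g ` A) = g p" "p \<in> A" "Min (g ` A) = g q" "q \<in> A"
    by (elim imageE)
  with abs_diff_le_spread[OF assms(1), of p q g]
  show "Max (g ` A) - Min (g ` A) \<le> spread g A" by simp
qed

lemma spread_const:
  assumes "finite V" "card (g ` V) \<le> 1" "A \<subseteq> V"
  shows "spread g A = 0"
proof (rule antisym)
  have fA: "finite A" using finite_subset[OF assms(3,1)] .
  have "card (g ` V) \<le> Suc 0" using assms(2) by simp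
  then have eq: "\<forall>x\<in>g ` V. \<forall>y\<in>g ` V. x = y"
    by (rule card_le_Suc0_iff_eq[OF finite_imageI[OF assms(1)], THEN iffD1])
  show "spread g A \<le> 0"
  proof (rule spread_le[OF fA])
    fix p q assume "p \<in> A" "q \<in> A"
    then have "g p = g q" using eq assms(3) by blast
    then show "\<bar>g p - g q\<bar> \<le> 0" by simp
  qed simp
  show "0 \<le> spread g A" using fA by (rule spread_nonneg)
qed

lemma boundary_min_level_set_iff:
  fixes g :: "'a \<Rightarrow> real"
  assumes fA: "finite A" and "A \<noteq> {}" and AV: "A \<subseteq> V" and ga: "\<And>x. x \<in> V \<Longrightarrow> a \<le> g x"
  shows "A \<in> boundary V {x\<in>V. g x = a} \<longleftrightarrow> Min (g ` A) = a \<and> Max (g ` A) \<noteq> a"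
proof
  assume "A \<in> boundary V {x\<in>V. g x = a}"
  then obtain x y where xy: "x \<in> A" "g x = a" "y \<in> A" "g y \<noteq> a"
    unfolding boundary_def by blast
  have "Min (g ` A) \<in> g ` A" using fA assms(2) by simp
  then have "a \<le> Min (g ` A)" using ga AV by auto
  moreover have "Min (g ` A) \<le> a" "g y \<le> Max (g ` A)" "a \<le> g y"
    using xy fA ga AV by auto
  ultimately show "Min (g ` A) = a \<and> Max (g ` A) \<noteq> a"
    using xy(4) by auto
next
  assume H: "Min (g ` A) = a \<and> Max (g ` A) \<noteq> a"
  have "Min (g ` A) \<in> g ` A" "Max (g ` A) \<in> g ` A" using fA assms(2) by simp_all
  with H AV show "A \<in> boundary V {x\<in>V. g x = a}"
    unfolding boundary_def by force
qed

lemma spread_raise_min: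
  fixes g :: "'a \<Rightarrow> real"
  assumes fV: "finite V" and a: "a = Min (g ` V)" and b: "b = Min (g ` V - {a})"
    and ne: "g ` V - {a} \<noteq> {}" and AV: "A \<subseteq> V"
  shows "spread g A
    = spread (\<lambda>x. max (g x) b) A + (b - a) * (if A \<in> boundary V {x\<in>V. g x = a} then 1 else 0)"
proof (cases "A = {}")
  case True
  then show ?thesis by (simp add: boundary_def)
next
  case False
  have ga: "a \<le> g x" if "x \<in> V" for x
    unfolding a using fV that by simp
  have gb: "b \<le> g x" if "x \<in> V" "g x \<noteq> a" for x
    unfolding b using fV that by simp
  have "b \<in> g ` V - {a}" unfolding b using fV ne by (intro Min_in) auto
  with ga have ab: "a < b" by fastforce
  have fA: "finite A" using finite_subset[OF AV fV] .
  define Mx where "Mx = Max (g ` A)"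
  define Mn where "Mn = Min (g ` A)"
  have "Mx \<in> g ` A" "Mn \<in> g ` A"
    unfolding Mx_def Mn_def using fA False by simp_all
  then obtain x1 x0 where x1: "Mx = g x1" "x1 \<in> A" and x0: "Mn = g x0" "x0 \<in> A"
    by (elim imageE)
  have Mn_le: "Mn \<le> g x" if "x \<in> A" for x
    unfolding Mn_def using fA that by simp
  have mono_max: "mono (\<lambda>v::real. max v b)" by (auto simp: mono_def)
  have "spread (\<lambda>x. max (g x) b) A = max Mx b - max Mn b"
    unfolding spread_eq_Max_minus_Min[OF fA False] Mx_def Mn_def
      image_image[of "\<lambda>v. max v b" g, symmetric]
    using mono_Max_commute[OF mono_max] mono_Min_commute[OF mono_max] fA False by simp
  moreover have "spread g A = Mx - Mn"
    unfolding Mx_def Mn_def by (rule spread_eq_Max_minus_Min[OF fA False])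
  moreover have "A \<in> boundary V {x\<in>V. g x = a} \<longleftrightarrow> Mn = a \<and> Mx \<noteq> a"
    unfolding Mn_def Mx_def using ga by (intro boundary_min_level_set_iff[OF fA False AV]) auto
  moreover have "Mn = a \<or> b \<le> Mn" "Mx = a \<or> b \<le> Mx" "a \<le> Mn" "Mn \<le> Mx"
    using gb[of x0] gb[of x1] ga[of x0] Mn_le[OF x1(2)] x0 x1 AV by auto
  ultimately show ?thesis using ab by (auto simp: max_def)
qed

lemma sum_spread_raise_min:
  fixes g :: "'a \<Rightarrow> real" and F :: "'a set \<Rightarrow> real"
  assumes fV: "finite V" and a: "a = Min (g ` V)" and b: "b = Min (g ` V - {a})"
    and ne: "g ` V - {a} \<noteq> {}"
  shows "(\<Sum>S\<in>Pow V. F S * spread g S)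
    = (\<Sum>S\<in>Pow V. F S * spread (\<lambda>x. max (g x) b) S)
      + (b - a) * (\<Sum>S\<in>boundary V {x\<in>V. g x = a}. F S)"
proof -
  let ?U = "{x\<in>V. g x = a}"
  have "(\<Sum>S\<in>Pow V. F S * spread g S) = (\<Sum>S\<in>Pow V. F S * spread (\<lambda>x. max (g x) b) S
      + (b - a) * (if S \<in> boundary V ?U then F S else 0))"
  proof (rule sum.cong[OF refl])
    fix S assume "S \<in> Pow V"
    then have eq: "spread g S
        = spread (\<lambda>x. max (g x) b) S + (b - a) * (if S \<in> boundary V ?U then 1 else 0)"
      by (intro spread_raise_min[OF assms]) simp
    show "F S * spread g S = F S * spread (\<lambda>x. max (g x) b) S
        + (b - a) * (if S \<in> boundary V ?U then F S else 0)"
      unfolding eq by (simp add: algebra_simps)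
  qed
  also have "\<dots> = (\<Sum>S\<in>Pow V. F S * spread (\<lambda>x. max (g x) b) S)
      + (b - a) * (\<Sum>S\<in>Pow V. if S \<in> boundary V ?U then F S else 0)"
    by (simp only: sum.distrib sum_distrib_left)
  also have "(\<Sum>S\<in>Pow V. if S \<in> boundary V ?U then F S else 0)
      = (\<Sum>S\<in>{S\<in>Pow V. S \<in> boundary V ?U}. F S)"
    using fV by (intro sum.inter_filter[symmetric]) simp
  also have "{S\<in>Pow V. S \<in> boundary V ?U} = boundary V ?U"
    using boundary_subset_Pow by blast
  finally show ?thesis .
qed

lemma card_image_raise_min_less:
  fixes g :: "'a \<Rightarrow> real"
  assumes fV: "finite V" and a: "a = Min (g ` V)" and b: "b = Min (g ` V - {a})"
    and ne: "g ` V - {a} \<noteq> {}"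
  shows "card ((\<lambda>x. max (g x) b) ` V) < card (g ` V)"
proof -
  have "a \<in> g ` V" unfolding a using fV ne by (intro Min_in) auto
  have b_in: "b \<in> g ` V - {a}" unfolding b using fV ne by (intro Min_in) auto
  have "max (g x) b \<in> g ` V - {a}" if "x \<in> V" for x
  proof (cases "g x = a")
    case True
    have "a \<le> b" unfolding a using b_in fV by simp
    with True b_in show ?thesis by (simp add: max_def)
  next
    case False
    moreover have "b \<le> g x" unfolding b using fV that False by simp
    ultimately show ?thesis using that by simp
  qed
  then have "(\<lambda>x. max (g x) b) ` V \<subseteq> g ` V - {a}" by blast
  then have "card ((\<lambda>x. max (g x) b) ` V) \<le> card (g ` V - {a})"
    using fV by (intro card_mono) auto
  also have "\<dots> < card (g ` V)"
    using fV \<open>a \<in> g ` V\<close> by (intro card_Diff1_less) auto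
  finally show ?thesis .
qed

text \<open>Induction on the number of values of g: raising the minimum a of g to the next value b
  splits off b - a times the cut around the level set of a, which the hypothesis bounds.\<close>
lemma cut_bound_spread:
  fixes g :: "'a \<Rightarrow> real"
  assumes fV: "finite V"
    and cut: "\<And>U. U \<subseteq> V \<Longrightarrow> M * (\<Sum>S\<in>boundary V U. D S) \<le> (\<Sum>A\<in>boundary V U. C A)"
  shows "M * (\<Sum>S\<in>Pow V. D S * spread g S) \<le> (\<Sum>R\<in>Pow V. C R * spread g R)"
proof (induction "card (g ` V)" arbitrary: g rule: less_induct)
  case less
  show ?case
  proof (cases "card (g ` V) \<le> 1")
    case True
    then show ?thesis using spread_const[OF fV True] by simp
  next
    case False
    define a where "a = Min (g ` V)"
    define b where "b = Min (g ` V - {a})"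
    have ne: "g ` V - {a} \<noteq> {}"
    proof
      assume "g ` V - {a} = {}"
      then have "card (g ` V) \<le> card {a}" by (intro card_mono) auto
      with False show False by simp
    qed
    have "b \<in> g ` V - {a}" unfolding b_def using fV ne by (intro Min_in) auto
    then have "a \<le> b" unfolding a_def using fV by (intro Min_le) auto
    have IH: "M * (\<Sum>S\<in>Pow V. D S * spread (\<lambda>x. max (g x) b) S)
        \<le> (\<Sum>R\<in>Pow V. C R * spread (\<lambda>x. max (g x) b) R)"
      using less card_image_raise_min_less[OF fV a_def b_def ne] by blast
    have "{x\<in>V. g x = a} \<subseteq> V" by blast
    note level_cut = cut[OF this]
    show ?thesis
      unfolding sum_spread_raise_min[OF fV a_def b_def ne]
      using IH level_cut \<open>a \<le> b\<close> mult_left_mono[OF level_cut, of "b - a"]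
      by (simp add: algebra_simps)
  qed
qed

lemma cut_bound_l1:
  fixes \<phi> :: "'a \<Rightarrow> nat \<Rightarrow> real"
  assumes fV: "finite V"
    and cut: "\<And>U. U \<subseteq> V \<Longrightarrow> M * (\<Sum>S\<in>boundary V U. D S) \<le> (\<Sum>A\<in>boundary V U. C A)"
    and emb: "\<forall>A. A \<subseteq> V \<longrightarrow> \<delta>' A = l1_div m (\<phi> ` A)"
  shows "M * (\<Sum>S\<in>Pow V. D S * \<delta>' S) \<le> (\<Sum>R\<in>Pow V. C R * \<delta>' R)"
proof -
  have split: "(\<Sum>S\<in>Pow V. F S * \<delta>' S) = (\<Sum>i<m. \<Sum>S\<in>Pow V. F S * spread (\<lambda>x. \<phi> x i) S)" for F
  proof -
    have "(\<Sum>S\<in>Pow V. F S * \<delta>' S) = (\<Sum>S\<in>Pow V. \<Sum>i<m. F S * spread (\<lambda>x. \<phi> x i) S)"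
      using emb by (simp add: l1_div_image sum_distrib_left)
    also have "\<dots> = (\<Sum>i<m. \<Sum>S\<in>Pow V. F S * spread (\<lambda>x. \<phi> x i) S)"
      by (rule sum.swap)
    finally show ?thesis .
  qed
  show ?thesis
    unfolding split sum_distrib_left
    by (intro sum_mono cut_bound_spread[OF fV cut, unfolded sum_distrib_left])
qed

section \<open>Every diversity has finite l1 distortion\<close>

definition frechet_map :: "'a list \<Rightarrow> ('a set \<Rightarrow> real) \<Rightarrow> 'a \<Rightarrow> nat \<Rightarrow> real" where
  "frechet_map xs \<delta> x i = \<delta> {xs ! i, x}"

context
  fixes V :: "'a set" and \<delta> :: "'a set \<Rightarrow> real"
  assumes div: "is_diversity V \<delta>" and fV: "finite V"
begin

lemma diversity_nonneg: "A \<subseteq> V \<Longrightarrow> 0 \<le> \<delta> A"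
  using div finite_subset[OF _ fV] unfolding is_diversity_def by simp

lemma diversity_card_le_1: "A \<subseteq> V \<Longrightarrow> card A \<le> 1 \<Longrightarrow> \<delta> A = 0"
  using div finite_subset[OF _ fV] unfolding is_diversity_def by simp

lemma diversity_triangle:
  "A \<subseteq> V \<Longrightarrow> B \<subseteq> V \<Longrightarrow> C \<subseteq> V \<Longrightarrow> B \<noteq> {} \<Longrightarrow> \<delta> (A \<union> C) \<le> \<delta> (A \<union> B) + \<delta> (B \<union> C)"
  using div finite_subset[OF _ fV] unfolding is_diversity_def by simp

lemma diversity_pair_le:
  assumes "A \<subseteq> V" "p \<in> A" "q \<in> A"
  shows "\<delta> {p, q} \<le> 2 * \<delta> A"
proof -
  have "\<delta> ({p} \<union> {q}) \<le> \<delta> ({p} \<union> A) + \<delta> (A \<union> {q})"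
    using assms by (intro diversity_triangle) auto
  moreover have "{p} \<union> A = A" "A \<union> {q} = A" "{p} \<union> {q} = {p, q}" using assms by auto
  ultimately show ?thesis by simp
qed

lemma diversity_pair_triangle:
  assumes "x \<in> V" "p \<in> V" "q \<in> V"
  shows "\<delta> {x, p} \<le> \<delta> {x, q} + \<delta> {p, q}"
proof -
  have "\<delta> ({x} \<union> {p}) \<le> \<delta> ({x} \<union> {q}) + \<delta> ({q} \<union> {p})"
    using assms by (intro diversity_triangle) auto
  moreover have "{x} \<union> {p} = {x, p}" "{x} \<union> {q} = {x, q}" "{q} \<union> {p} = {p, q}" by auto
  ultimately show ?thesis by simp
qed

lemma diversity_le_sum_pairs:
  "a0 \<in> V \<Longrightarrow> B \<subseteq> V \<Longrightarrow> \<delta> (insert a0 B) \<le> (\<Sum>a\<in>B. \<delta> {a0, a})"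
proof (induction B rule: infinite_finite_induct)
  case (infinite B)
  then show ?case using finite_subset[OF _ fV] by blast
next
  case empty
  then show ?case using diversity_card_le_1[of "{a0}"] by simp
next
  case (insert c B)
  have "\<delta> (insert a0 B \<union> {c}) \<le> \<delta> (insert a0 B \<union> {a0}) + \<delta> ({a0} \<union> {c})"
    using insert.prems by (intro diversity_triangle) auto
  moreover have "insert a0 B \<union> {c} = insert a0 (insert c B)" "insert a0 B \<union> {a0} = insert a0 B"
    "{a0} \<union> {c} = {a0, c}" by auto
  ultimately have "\<delta> (insert a0 (insert c B)) \<le> \<delta> (insert a0 B) + \<delta> {a0, c}"
    by simp
  with insert show ?case by (simp add: add.commute)
qed

lemma l1_div_frechet_map_le:
  assumes xs: "set xs \<subseteq> V" and AV: "A \<subseteq> V"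
  shows "l1_div (length xs) (frechet_map xs \<delta> ` A) \<le> 2 * real (length xs) * \<delta> A"
proof -
  have fA: "finite A" using finite_subset[OF AV fV] .
  have "spread (\<lambda>x. frechet_map xs \<delta> x i) A \<le> 2 * \<delta> A" if i: "i < length xs" for i
  proof (rule spread_le[OF fA])
    show "0 \<le> 2 * \<delta> A" using diversity_nonneg[OF AV] by simp
    have v: "xs ! i \<in> V" using nth_mem[OF i] xs by blast
    fix p q assume pq: "p \<in> A" "q \<in> A"
    then have pV: "p \<in> V" "q \<in> V" using AV by auto
    have "\<delta> {xs ! i, p} \<le> \<delta> {xs ! i, q} + \<delta> {p, q}"
      using diversity_pair_triangle[OF v pV] .
    moreover have "\<delta> {xs ! i, q} \<le> \<delta> {xs ! i, p} + \<delta> {q, p}"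
      using diversity_pair_triangle[OF v pV(2,1)] .
    moreover have "{q, p} = {p, q}" by auto
    ultimately have "\<bar>frechet_map xs \<delta> p i - frechet_map xs \<delta> q i\<bar> \<le> \<delta> {p, q}"
      unfolding frechet_map_def by (simp add: abs_le_iff)
    also have "\<dots> \<le> 2 * \<delta> A" by (rule diversity_pair_le[OF AV pq])
    finally show "\<bar>frechet_map xs \<delta> p i - frechet_map xs \<delta> q i\<bar> \<le> 2 * \<delta> A" .
  qed
  then have "(\<Sum>i<length xs. spread (\<lambda>x. frechet_map xs \<delta> x i) A)
      \<le> of_nat (card {..<length xs}) * (2 * \<delta> A)"
    by (intro sum_bounded_above) simp
  then show ?thesis unfolding l1_div_image by simp
qed

lemma le_l1_div_frechet_map:
  assumes xs: "set xs = V" and AV: "A \<subseteq> V"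
  shows "\<delta> A \<le> real (card V) * l1_div (length xs) (frechet_map xs \<delta> ` A)"
proof (cases "A = {}")
  case True
  then show ?thesis using diversity_card_le_1[of A] l1_div_nonneg[of A] by simp
next
  case False
  let ?\<delta>' = "l1_div (length xs) (frechet_map xs \<delta> ` A)"
  obtain a0 where a0: "a0 \<in> A" using False by blast
  have fA: "finite A" using finite_subset[OF AV fV] .
  have "a0 \<in> set xs" using a0 AV xs by auto
  then obtain i0 where i0: "i0 < length xs" "xs ! i0 = a0" by (auto simp: in_set_conv_nth)
  have pair: "\<delta> {a0, a} \<le> ?\<delta>'" if a: "a \<in> A" for a
  proof -
    have "\<delta> {a0, a0} = 0" using diversity_card_le_1[of "{a0}"] a0 AV by auto
    moreover have "0 \<le> \<delta> {a0, a}" using a0 a AV by (intro diversity_nonneg) auto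
    ultimately have "\<delta> {a0, a} = \<bar>frechet_map xs \<delta> a0 i0 - frechet_map xs \<delta> a i0\<bar>"
      unfolding frechet_map_def i0(2) by simp
    also have "\<dots> \<le> spread (\<lambda>x. frechet_map xs \<delta> x i0) A" by (rule abs_diff_le_spread[OF fA a0 a])
    also have "\<dots> \<le> ?\<delta>'"
      unfolding l1_div_image using i0(1) fA spread_nonneg
      by (intro member_le_sum[where f = "\<lambda>i. spread (\<lambda>x. frechet_map xs \<delta> x i) A"]) auto
    finally show ?thesis .
  qed
  have "\<delta> A = \<delta> (insert a0 A)" using a0 by (simp add: insert_absorb)
  also have "\<dots> \<le> (\<Sum>a\<in>A. \<delta> {a0, a})" using a0 AV by (intro diversity_le_sum_pairs) auto
  also have "\<dots> \<le> real (card A) * ?\<delta>'" by (rule sum_bounded_above) (rule pair)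
  also have "\<dots> \<le> real (card V) * ?\<delta>'"
    using card_mono[OF fV AV] l1_div_nonneg[OF fA] by (intro mult_right_mono) auto
  finally show ?thesis .
qed

lemma l1_embeddable_at_distortion:
  assumes "V \<noteq> {}"
  shows "\<exists>\<delta>'. l1_embeddable V \<delta>' \<and> at_distortion V \<delta> \<delta>' (real (card V) * (2 * real (card V)))"
proof -
  obtain xs where xs: "set xs = V" "distinct xs" using finite_distinct_list[OF fV] by blast
  have len: "length xs = card V" using distinct_card[OF xs(2)] xs(1) by simp
  have pos: "0 < real (card V)" using fV assms by (simp add: card_gt_0_iff)
  define \<delta>' where "\<delta>' = (\<lambda>A. l1_div (length xs) (frechet_map xs \<delta> ` A))"
  have "at_distortion V \<delta> \<delta>' (real (card V) * (2 * real (card V)))"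
    unfolding at_distortion_def
  proof (intro exI conjI allI impI)
    fix A assume "A \<subseteq> V"
    then show "\<delta> A / real (card V) \<le> \<delta>' A" "\<delta>' A \<le> 2 * real (card V) * \<delta> A"
      using le_l1_div_frechet_map[OF xs(1)] l1_div_frechet_map_le[of xs A] xs(1) pos
      unfolding \<delta>'_def len by (simp_all add: divide_le_eq mult.commute)
  qed (use pos in auto)
  moreover have "l1_embeddable V \<delta>'" unfolding l1_embeddable_def \<delta>'_def by blast
  ultimately show ?thesis by blast
qed

lemma
  assumes "V \<noteq> {}"
  shows k1_div_nonneg: "0 \<le> k1_div V \<delta>"
    and k1_div_le_card: "k1_div V \<delta> \<le> real (card V) * (2 * real (card V))"
    and l1_distortions_nonempty: "{c. \<exists>\<delta>'. l1_embeddable V \<delta>' \<and> at_distortion V \<delta> \<delta>' c} \<noteq> {}"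
proof -
  let ?X = "{c. \<exists>\<delta>'. l1_embeddable V \<delta>' \<and> at_distortion V \<delta> \<delta>' c}"
  have mem: "real (card V) * (2 * real (card V)) \<in> ?X"
    using l1_embeddable_at_distortion[OF assms] by simp
  then have ne: "?X \<noteq> {}" by (metis empty_iff)
  have pos: "0 \<le> c" if "c \<in> ?X" for c
  proof -
    from that obtain c1 c2 where "0 < c1" "0 < c2" "c = c1 * c2"
      unfolding at_distortion_def by blast
    then show ?thesis by simp
  qed
  then have "bdd_below ?X" unfolding bdd_below_def by blast
  with mem show "k1_div V \<delta> \<le> real (card V) * (2 * real (card V))"
    unfolding k1_div_def by (rule cInf_lower)
  show "0 \<le> k1_div V \<delta>"
    unfolding k1_div_def using pos by (rule cInf_greatest[OF ne])
  show "?X \<noteq> {}" by (rule ne)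
qed

end

lemma k1_div_le_k1_hyp:
  assumes "finite V" "V \<noteq> {}" "supported_on V E \<delta>"
  shows "k1_div V \<delta> \<le> k1_hyp V E"
proof -
  have "bdd_above {k1_div V \<delta> | \<delta>. supported_on V E \<delta>}"
    using k1_div_le_card assms(1,2) unfolding bdd_above_def supported_on_def by blast
  then show ?thesis
    unfolding k1_hyp_def using assms(3) by (intro cSup_upper) auto
qed

section \<open>LP duality for hypergraph Steiner packings\<close>

text \<open>hsp_feasible V C D g says that (C, g D), indexed by hsp_rows (capacity rows Inl R, demand
  rows Inr S), lies in the cone spanned by the columns hsp_column j: one column per tree
  variable Inl (S, t) and one slack column per capacity row.\<close>
definition hsp_rows :: "'a set \<Rightarrow> ('a set + 'a set) set" where
  "hsp_rows V = Pow V <+> Pow V"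

definition hsp_columns :: "'a set \<Rightarrow> (('a set \<times> 'a set set) + 'a set) set" where
  "hsp_columns V = (SIGMA S:Pow V. Trees V S) <+> Pow V"

definition hsp_column :: "('a set \<times> 'a set set) + 'a set \<Rightarrow> 'a set + 'a set \<Rightarrow> real" where
  "hsp_column j i = (case (j, i) of
      (Inl (S, t), Inl R) \<Rightarrow> (if R \<in> t then 1 else 0)
    | (Inl (S, t), Inr S') \<Rightarrow> (if S' = S then 1 else 0)
    | (Inr R, Inl R') \<Rightarrow> (if R' = R then 1 else 0)
    | (Inr R, Inr S') \<Rightarrow> 0)"

definition hsp_rhs :: "('a set \<Rightarrow> real) \<Rightarrow> ('a set \<Rightarrow> real) \<Rightarrow> real \<Rightarrow> 'a set + 'a set \<Rightarrow> real" where
  "hsp_rhs C D g i = (case i of Inl R \<Rightarrow> C R | Inr S \<Rightarrow> g * D S)"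

lemma finite_hsp_rows: "finite V \<Longrightarrow> finite (hsp_rows V)"
  unfolding hsp_rows_def by simp

lemma finite_hsp_columns: "finite V \<Longrightarrow> finite (hsp_columns V)"
  unfolding hsp_columns_def by (intro finite_Plus finite_SigmaI) (simp_all add: finite_Trees)

lemma dot_hsp_rows:
  "finite V \<Longrightarrow> dot (hsp_rows V) y v
    = (\<Sum>R\<in>Pow V. y (Inl R) * v (Inl R)) + (\<Sum>S\<in>Pow V. y (Inr S) * v (Inr S))"
  unfolding dot_def hsp_rows_def by (simp add: sum.Plus comp_def)

lemma sum_hsp_columns:
  assumes "finite V"
  shows "(\<Sum>j\<in>hsp_columns V. h j)
    = (\<Sum>S\<in>Pow V. \<Sum>t\<in>Trees V S. h (Inl (S, t))) + (\<Sum>R\<in>Pow V. h (Inr R))"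
proof -
  have fSigma: "finite (SIGMA S:Pow V. Trees V S)"
    using assms by (intro finite_SigmaI) (simp_all add: finite_Trees)
  have "(\<Sum>j\<in>hsp_columns V. h j)
      = (\<Sum>st\<in>(SIGMA S:Pow V. Trees V S). h (Inl st)) + (\<Sum>R\<in>Pow V. h (Inr R))"
    unfolding hsp_columns_def using fSigma assms by (simp add: sum.Plus comp_def)
  moreover have "(\<Sum>S\<in>Pow V. \<Sum>t\<in>Trees V S. h (Inl (S, t)))
      = (\<Sum>st\<in>(SIGMA S:Pow V. Trees V S). h (Inl st))"
    using sum.Sigma[of "Pow V" "Trees V" "\<lambda>S t. h (Inl (S, t))"] assms by (simp add: finite_Trees)
  ultimately show ?thesis by simp
qed

lemma hsp_feasible_if_in_cone:
  assumes fV: "finite V" and l0: "\<forall>j\<in>hsp_columns V. 0 \<le> l j"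
    and l: "\<forall>i\<in>hsp_rows V. hsp_rhs C D g i = (\<Sum>j\<in>hsp_columns V. l j * hsp_column j i)"
  shows "hsp_feasible V C D g"
  unfolding hsp_feasible_def
proof (intro exI[of _ "\<lambda>S t. l (Inl (S, t))"] conjI ballI)
  fix S t assume "S \<in> Pow V" "t \<in> Trees V S"
  then show "0 \<le> l (Inl (S, t))" using l0 unfolding hsp_columns_def by blast
next
  fix R assume R: "R \<in> Pow V"
  then have row: "Inl R \<in> hsp_rows V" unfolding hsp_rows_def by (rule InlI)
  have "C R = (\<Sum>S\<in>Pow V. \<Sum>t\<in>Trees V S. if R \<in> t then l (Inl (S, t)) else 0) + l (Inr R)"
    using bspec[OF l row] R fV
    by (simp add: hsp_rows_def hsp_rhs_def hsp_column_def sum_hsp_columns if_distrib cong: if_cong)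
  moreover have "0 \<le> l (Inr R)" using l0 R unfolding hsp_columns_def by blast
  ultimately show "(\<Sum>S\<in>Pow V. \<Sum>t\<in>{t\<in>Trees V S. R \<in> t}. l (Inl (S, t))) \<le> C R"
    using finite_Trees[OF fV] by (simp add: sum.inter_filter)
next
  fix S assume S: "S \<in> Pow V"
  then have row: "Inr S \<in> hsp_rows V" unfolding hsp_rows_def by (rule InrI)
  have "g * D S = (\<Sum>S'\<in>Pow V. \<Sum>t\<in>Trees V S'. if S = S' then l (Inl (S', t)) else 0)"
    using bspec[OF l row] S fV
    by (simp add: hsp_rows_def hsp_rhs_def hsp_column_def sum_hsp_columns if_distrib cong: if_cong)
  also have "\<dots> = (\<Sum>S'\<in>Pow V. if S = S' then \<Sum>t\<in>Trees V S'. l (Inl (S', t)) else 0)"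
    by (intro sum.cong) auto
  also have "\<dots> = (\<Sum>t\<in>Trees V S. l (Inl (S, t)))"
    using S fV by simp
  finally show "(\<Sum>t\<in>Trees V S. l (Inl (S, t))) = g * D S" ..
qed

lemma hsp_infeasible_separated:
  assumes fV: "finite V" and infeasible: "\<not> hsp_feasible V C D g"
  obtains y where "\<forall>j\<in>hsp_columns V. 0 \<le> dot (hsp_rows V) y (hsp_column j)"
    and "dot (hsp_rows V) y (hsp_rhs C D g) < 0"
proof -
  have "\<not> (\<forall>y. (\<forall>j\<in>hsp_columns V. 0 \<le> dot (hsp_rows V) y (hsp_column j))
      \<longrightarrow> 0 \<le> dot (hsp_rows V) y (hsp_rhs C D g))"
  proof
    assume "\<forall>y. (\<forall>j\<in>hsp_columns V. 0 \<le> dot (hsp_rows V) y (hsp_column j))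
      \<longrightarrow> 0 \<le> dot (hsp_rows V) y (hsp_rhs C D g)"
    from farkas_lemma[OF finite_hsp_columns[OF fV] finite_hsp_rows[OF fV] this]
    obtain l where "\<forall>j\<in>hsp_columns V. 0 \<le> l j"
      "\<forall>i\<in>hsp_rows V. hsp_rhs C D g i = (\<Sum>j\<in>hsp_columns V. l j * hsp_column j i)"
      by blast
    with hsp_feasible_if_in_cone[OF fV] infeasible show False by blast
  qed
  with that show ?thesis by (auto simp: not_le)
qed

lemma hsp_dual_certificate:
  fixes V :: "'a set" and C D :: "'a set \<Rightarrow> real"
  assumes fV: "finite V" and infeasible: "\<not> hsp_feasible V C D g"
  obtains w u where "\<forall>R\<in>Pow V. 0 \<le> w R"
    and "\<forall>S\<in>Pow V. \<forall>t\<in>Trees V S. u S \<le> (\<Sum>R\<in>t. w R)"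
    and "(\<Sum>R\<in>Pow V. w R * C R) < g * (\<Sum>S\<in>Pow V. u S * D S)"
proof -
  obtain y where y: "\<forall>j\<in>hsp_columns V. 0 \<le> dot (hsp_rows V) y (hsp_column j)"
    and y_rhs: "dot (hsp_rows V) y (hsp_rhs C D g) < 0"
    using hsp_infeasible_separated[OF fV infeasible] by blast
  define w where "w = (\<lambda>R. y (Inl R))"
  define u where "u = (\<lambda>S. - y (Inr S))"
  show ?thesis
  proof
    show "\<forall>R\<in>Pow V. 0 \<le> w R"
    proof
      fix R assume R: "R \<in> Pow V"
      then have "0 \<le> dot (hsp_rows V) y (hsp_column (Inr R))"
        using y unfolding hsp_columns_def by blast
      then show "0 \<le> w R"
        using R fV by (simp add: dot_hsp_rows hsp_column_def w_def if_distrib cong: if_cong)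
    qed
    show "\<forall>S\<in>Pow V. \<forall>t\<in>Trees V S. u S \<le> (\<Sum>R\<in>t. w R)"
    proof (intro ballI)
      fix S t assume S: "S \<in> Pow V" and t: "t \<in> Trees V S"
      then have "0 \<le> dot (hsp_rows V) y (hsp_column (Inl (S, t)))"
        using y unfolding hsp_columns_def by blast
      also have "\<dots> = (\<Sum>R\<in>Pow V. if R \<in> t then w R else 0) - u S"
        using S fV by (simp add: dot_hsp_rows hsp_column_def w_def u_def if_distrib cong: if_cong)
      also have "(\<Sum>R\<in>Pow V. if R \<in> t then w R else 0) = (\<Sum>R\<in>t. w R)"
        using fV Trees_subset_Pow[OF t] by (simp add: sum.If_cases inf.absorb2)
      finally show "u S \<le> (\<Sum>R\<in>t. w R)" by simp
    qed
    have "dot (hsp_rows V) y (hsp_rhs C D g)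
        = (\<Sum>R\<in>Pow V. w R * C R) - g * (\<Sum>S\<in>Pow V. u S * D S)"
      using fV by (simp add: dot_hsp_rows hsp_rhs_def w_def u_def sum_distrib_left sum_negf algebra_simps)
    with y_rhs show "(\<Sum>R\<in>Pow V. w R * C R) < g * (\<Sum>S\<in>Pow V. u S * D S)" by simp
  qed
qed

section \<open>The approximate max-flow min-cut theorem\<close>

lemma hsp_dual_steiner:
  assumes fV: "finite V" and EV: "E \<subseteq> Pow V" and cV: "conn_contains V E"
    and C0: "\<forall>R. R \<subseteq> V \<longrightarrow> 0 \<le> C R" and C_supp: "\<forall>R. R \<subseteq> V \<longrightarrow> R \<notin> E \<longrightarrow> C R = 0"
    and D0: "\<forall>S. S \<subseteq> V \<longrightarrow> 0 \<le> D S" and "0 \<le> g"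
    and w0: "\<forall>R\<in>Pow V. 0 \<le> w R"
    and uw: "\<forall>S\<in>Pow V. \<forall>t\<in>Trees V S. u S \<le> (\<Sum>R\<in>t. w R)"
    and wu: "(\<Sum>R\<in>Pow V. w R * C R) < g * (\<Sum>S\<in>Pow V. u S * D S)"
  shows "(\<Sum>R\<in>Pow V. C R * steiner E w R) < g * (\<Sum>S\<in>Pow V. D S * steiner E w S)"
proof -
  have fE: "finite E" using fV EV by (simp add: finite_subset)
  have wE: "\<forall>e\<in>E. 0 \<le> w e" using w0 EV by blast
  have "C R * steiner E w R \<le> w R * C R" if R: "R \<in> Pow V" for R
  proof (cases "R \<in> E")
    case True
    have "0 \<le> C R" using C0 R by simp
    with steiner_le_weight[OF fE True] show ?thesis by (simp add: mult.commute mult_left_mono)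
  next
    case False
    then show ?thesis using C_supp R by simp
  qed
  then have "(\<Sum>R\<in>Pow V. C R * steiner E w R) \<le> (\<Sum>R\<in>Pow V. w R * C R)"
    by (rule sum_mono)
  also note wu
  also have "(\<Sum>S\<in>Pow V. u S * D S) \<le> (\<Sum>S\<in>Pow V. D S * steiner E w S)"
  proof (rule sum_mono)
    fix S assume S: "S \<in> Pow V"
    then obtain t where "t \<in> Trees V S" "(\<Sum>R\<in>t. w R) \<le> steiner E w S"
      using steiner_le_tree_weight[OF fV EV _ wE] conn_contains_subset[OF cV] by blast
    then have "u S \<le> steiner E w S" using uw S by fastforce
    then show "u S * D S \<le> D S * steiner E w S"
      using D0 S by (simp add: mult.commute mult_left_mono)
  qed
  then have "g * (\<Sum>S\<in>Pow V. u S * D S) \<le> g * (\<Sum>S\<in>Pow V. D S * steiner E w S)"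
    using \<open>0 \<le> g\<close> by (rule mult_left_mono)
  finally show ?thesis .
qed

lemma cut_ratio_le_distortion:
  assumes fV: "finite V"
    and cut: "\<And>U. U \<subseteq> V \<Longrightarrow> M * (\<Sum>S\<in>boundary V U. D S) \<le> (\<Sum>A\<in>boundary V U. C A)"
    and C0: "\<forall>R. R \<subseteq> V \<longrightarrow> 0 \<le> C R" and D0: "\<forall>S. S \<subseteq> V \<longrightarrow> 0 \<le> D S"
    and \<delta>0: "\<forall>A. A \<subseteq> V \<longrightarrow> 0 \<le> \<delta> A" and "0 < g"
    and strict: "(\<Sum>R\<in>Pow V. C R * \<delta> R) < g * (\<Sum>S\<in>Pow V. D S * \<delta> S)"
    and emb: "l1_embeddable V \<delta>'" and dist: "at_distortion V \<delta> \<delta>' c"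
  shows "M \<le> c * g"
proof -
  obtain m and \<phi> :: "'a \<Rightarrow> nat \<Rightarrow> real" where \<phi>: "\<forall>A. A \<subseteq> V \<longrightarrow> \<delta>' A = l1_div m (\<phi> ` A)"
    using emb unfolding l1_embeddable_def by blast
  obtain c1 c2 where c: "0 < c1" "0 < c2" "c = c1 * c2"
    and lower: "\<forall>A. A \<subseteq> V \<longrightarrow> \<delta> A / c1 \<le> \<delta>' A" and upper: "\<forall>A. A \<subseteq> V \<longrightarrow> \<delta>' A \<le> c2 * \<delta> A"
    using dist unfolding at_distortion_def by blast
  define SC where "SC = (\<Sum>R\<in>Pow V. C R * \<delta> R)"
  define SD where "SD = (\<Sum>S\<in>Pow V. D S * \<delta> S)"
  define X where "X = (\<Sum>S\<in>Pow V. D S * \<delta>' S)"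
  define Y where "Y = (\<Sum>R\<in>Pow V. C R * \<delta>' R)"
  have "Y \<le> c2 * SC" unfolding Y_def SC_def sum_distrib_left
  proof (rule sum_mono)
    fix R assume "R \<in> Pow V"
    then have "0 \<le> C R" "\<delta>' R \<le> c2 * \<delta> R" using C0 upper by auto
    then have "C R * \<delta>' R \<le> C R * (c2 * \<delta> R)" by (rule mult_left_mono[rotated])
    then show "C R * \<delta>' R \<le> c2 * (C R * \<delta> R)" by (simp add: algebra_simps)
  qed
  have SD_le: "SD \<le> c1 * X" unfolding X_def SD_def sum_distrib_left
  proof (rule sum_mono)
    fix S assume "S \<in> Pow V"
    then have "0 \<le> D S" "\<delta> S \<le> c1 * \<delta>' S"
      using D0 lower c(1) by (auto simp: divide_le_eq mult.commute)
    then have "D S * \<delta> S \<le> D S * (c1 * \<delta>' S)" by (rule mult_left_mono[rotated])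
    then show "D S * \<delta> S \<le> c1 * (D S * \<delta>' S)" by (simp add: algebra_simps)
  qed
  have "0 \<le> SC" unfolding SC_def using C0 \<delta>0 by (intro sum_nonneg mult_nonneg_nonneg) auto
  with strict \<open>0 < g\<close> have "0 < SD" unfolding SC_def SD_def
    by (smt (verit) mult_nonneg_nonpos)
  with SD_le c(1) have "0 < X" by (smt (verit) mult_nonneg_nonpos)
  have "M * X \<le> Y" unfolding X_def Y_def by (rule cut_bound_l1[OF fV cut \<phi>])
  also have "\<dots> \<le> c2 * SC" by fact
  also have "\<dots> \<le> c2 * (g * SD)" using strict c(2) unfolding SC_def SD_def by simp
  also have "\<dots> \<le> c2 * (g * (c1 * X))" using SD_le c(2) \<open>0 < g\<close> by simp
  also have "\<dots> = (c * g) * X" unfolding c(3) by (simp add: algebra_simps)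
  finally show ?thesis using \<open>0 < X\<close> by simp
qed

lemma MinHypCut_le_k1_hyp_mult:
  assumes fV: "finite V" and EV: "E \<subseteq> Pow V" and cV: "conn_contains V E"
    and C0: "\<forall>R. R \<subseteq> V \<longrightarrow> 0 \<le> C R" and C_supp: "\<forall>R. R \<subseteq> V \<longrightarrow> R \<notin> E \<longrightarrow> C R = 0"
    and D0: "\<forall>S. S \<subseteq> V \<longrightarrow> 0 \<le> D S" and "V \<noteq> {}"
    and "0 < g" and infeasible: "\<not> hsp_feasible V C D g"
  shows "MinHypCut V C D \<le> k1_hyp V E * g"
proof -
  obtain w u where w0: "\<forall>R\<in>Pow V. 0 \<le> w R"
    and "\<forall>S\<in>Pow V. \<forall>t\<in>Trees V S. u S \<le> (\<Sum>R\<in>t. w R)"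
    and "(\<Sum>R\<in>Pow V. w R * C R) < g * (\<Sum>S\<in>Pow V. u S * D S)"
    using hsp_dual_certificate[OF fV infeasible] by blast
  then have strict: "(\<Sum>R\<in>Pow V. C R * steiner E w R) < g * (\<Sum>S\<in>Pow V. D S * steiner E w S)"
    using hsp_dual_steiner[OF fV EV cV C0 C_supp D0] \<open>0 < g\<close> by simp
  have supp: "supported_on V E (steiner E w)"
    using w0 EV by (intro supported_on_steiner[OF fV EV cV]) blast
  then have div: "is_diversity V (steiner E w)" unfolding supported_on_def by blast
  have "MinHypCut V C D / g \<le> k1_div V (steiner E w)"
    unfolding k1_div_def
  proof (rule cInf_greatest[OF l1_distortions_nonempty[OF div fV \<open>V \<noteq> {}\<close>]], clarify)
    fix c \<delta>' assume emb: "l1_embeddable V \<delta>'" and dist: "at_distortion V (steiner E w) \<delta>' c"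
    have "\<forall>A. A \<subseteq> V \<longrightarrow> 0 \<le> steiner E w A" using diversity_nonneg[OF div fV] by blast
    from cut_ratio_le_distortion[OF fV MinHypCut_mult_le_cut[OF fV _ C0 D0] C0 D0 this
        \<open>0 < g\<close> strict emb dist]
    show "MinHypCut V C D / g \<le> c" using \<open>0 < g\<close> by (simp add: divide_le_eq)
  qed
  also have "\<dots> \<le> k1_hyp V E" by (rule k1_div_le_k1_hyp[OF fV \<open>V \<noteq> {}\<close> supp])
  finally show ?thesis using \<open>0 < g\<close> by (simp add: divide_le_eq mult.commute)
qed

lemma k1_hyp_nonneg:
  assumes "finite V" "V \<noteq> {}" "E \<subseteq> Pow V" "conn_contains V E"
  shows "0 \<le> k1_hyp V E"
proof -
  have supp: "supported_on V E (steiner E (\<lambda>R. 1))"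
    using assms by (intro supported_on_steiner) auto
  then have "0 \<le> k1_div V (steiner E (\<lambda>R. 1))"
    using k1_div_nonneg assms(1,2) unfolding supported_on_def by blast
  also have "\<dots> \<le> k1_hyp V E" by (rule k1_div_le_k1_hyp[OF assms(1,2) supp])
  finally show ?thesis .
qed

lemma le_mult_if_le_mult_greater:
  fixes K x y :: real
  assumes "0 \<le> K" and bound: "\<And>g. x < g \<Longrightarrow> y \<le> K * g"
  shows "y \<le> K * x"
proof (cases "K = 0")
  case True
  then show ?thesis using bound[of "x + 1"] by simp
next
  case False
  with assms(1) have "0 < K" by simp
  have "y / K \<le> x"
  proof (rule dense_ge)
    fix g assume "x < g"
    then have "y \<le> g * K" using bound[of g] by (simp only: mult.commute)
    with \<open>0 < K\<close> show "y / K \<le> g" by (simp only: pos_divide_le_eq)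
  qed
  with \<open>0 < K\<close> have "y \<le> x * K" by (simp only: pos_divide_le_eq)
  then show ?thesis by (simp only: mult.commute)
qed

theorem theorem18:
  fixes V :: "'a set" and E :: "'a set set"
    and C D :: "'a set \<Rightarrow> real"
  assumes "finite V"
    and "E \<subseteq> Pow V"
    and "conn_contains V E"
    and "\<forall>R. R \<subseteq> V \<longrightarrow> 0 \<le> C R"
    and "\<forall>R. R \<subseteq> V \<longrightarrow> R \<notin> E \<longrightarrow> C R = 0"
    and "\<forall>S. S \<subseteq> V \<longrightarrow> 0 \<le> D S"
    and "\<exists>S. S \<subseteq> V \<and> 2 \<le> card S \<and> 0 < D S"
  shows "MaxHSP V C D \<le> MinHypCut V C D \<and> MinHypCut V C D \<le> k1_hyp V E * MaxHSP V C D"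
proof
  show "MaxHSP V C D \<le> MinHypCut V C D"
    by (rule MaxHSP_le_MinHypCut[OF assms(1,4,6,7)])
  have "V \<noteq> {}" using assms(7) by fastforce
  show "MinHypCut V C D \<le> k1_hyp V E * MaxHSP V C D"
  proof (rule le_mult_if_le_mult_greater)
    show "0 \<le> k1_hyp V E" by (rule k1_hyp_nonneg[OF assms(1) \<open>V \<noteq> {}\<close> assms(2,3)])
    fix g assume g: "MaxHSP V C D < g"
    then have "0 < g" using MaxHSP_nonneg[OF assms(1,4,6,7)] by simp
    moreover have "\<not> hsp_feasible V C D g"
      using hsp_feasible_le_MaxHSP[OF assms(1,4,6,7), of g] g by auto
    ultimately show "MinHypCut V C D \<le> k1_hyp V E * g"
      by (rule MinHypCut_le_k1_hyp_mult[OF assms(1-6) \<open>V \<noteq> {}\<close>])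
  qed
qed

end
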